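(* For all distinct positive real numbers $a$ and $b$, $$1< \frac{I(a,b)}{\sqrt{I\big(A(a,b)^2,G(a,b)^2\big)}} < \frac{2}{\sqrt{e}}.$$ Both bounds are sharp (the constants $1$ and $2/\sqrt e$ cannot be replaced by larger, respectively smaller, constants).
   Context: For positive reals $x\neq y$: arithmetic mean $A(x,y)=\frac{x+y}{2}$, geometric mean $G(x,y)=\sqrt{xy}$, and identric mean $I(x,y)=\frac{1}{e}\left(\frac{x^x}{y^y}\right)^{1/(x-y)}$. *)

theory Defs
  imports Complex_Main
begin

definition AM :: "real \<Rightarrow> real \<Rightarrow> real" where
  "AM x y = (x + y) / 2"

definition GM :: "real \<Rightarrow> real \<Rightarrow> real" where
  "GM x y = sqrt (x * y)"

text \<open>Identric mean, for positive x different from y.\<close>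
definition IM :: "real \<Rightarrow> real \<Rightarrow> real" where
  "IM x y = (1 / exp 1) * ((x powr x) / (y powr y)) powr (1 / (x - y))"

definition ratio :: "real \<Rightarrow> real \<Rightarrow> real" where
  "ratio a b = IM a b / sqrt (IM ((AM a b)^2) ((GM a b)^2))"

end

theory Submission
  imports Defs "HOL-Real_Asymp.Real_Asymp"
begin

text \<open>
  Put \<open>t = (a - b)/(a + b)\<close>, so that \<open>a = A (1 + t)\<close> and \<open>b = A (1 - t)\<close> with \<open>A = A(a,b)\<close>.
  Using \<open>ln I(x,y) = (x ln x - y ln y)/(x - y) - 1\<close> one finds
  \<open>ln (I(a,b) / sqrt (I(A\<^sup>2,G\<^sup>2))) = (\<phi>(t)/t\<^sup>2 - 1)/2\<close> with
  \<open>\<phi>(t) = (1+t) ln(1+t) + (1-t) ln(1-t)\<close>. The quotient \<open>\<phi>(t)/t\<^sup>2\<close> is even and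
  strictly increasing on \<open>(0,1)\<close>, with limits \<open>1\<close> at \<open>0\<close> and \<open>2 ln 2\<close> at \<open>1\<close>;
  hence it lies strictly between them, and the limits show that both bounds are sharp.
\<close>

lemma DERIV_pos_on_interior_imp_less:
  fixes f f' :: "real \<Rightarrow> real"
  assumes "a < b"
    and "\<And>x. a \<le> x \<Longrightarrow> x \<le> b \<Longrightarrow> (f has_real_derivative f' x) (at x)"
    and "\<And>x. a < x \<Longrightarrow> x < b \<Longrightarrow> 0 < f' x"
  shows "f a < f b"
proof (rule DERIV_pos_imp_increasing_open[OF \<open>a < b\<close>])
  show "continuous_on {a..b} f"
    using assms(2) by (intro DERIV_atLeastAtMost_imp_continuous_on) blast
qed (use assms in \<open>blast intro: less_imp_le\<close>)

lemma IM_eq_exp: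
  assumes "0 < x" "0 < y" "x \<noteq> y"
  shows "IM x y = exp ((x * ln x - y * ln y) / (x - y) - 1)"
proof -
  have "x powr x / y powr y = exp (x * ln x - y * ln y)"
    using assms by (simp add: powr_def exp_diff mult.commute)
  then have "(x powr x / y powr y) powr (1 / (x - y)) = exp ((x * ln x - y * ln y) / (x - y))"
    by (simp add: powr_def)
  then show ?thesis
    unfolding IM_def by (simp add: exp_diff)
qed

lemma sqrt_exp: "sqrt (exp z) = exp (z / 2)"
proof -
  have "exp z = (exp (z / 2))\<^sup>2"
    by (simp add: power2_eq_square flip: exp_add)
  then show ?thesis by simp
qed

lemma two_div_sqrt_exp_1: "2 / sqrt (exp 1) = exp ((2 * ln 2 - 1) / 2)"
  by (simp add: sqrt_exp exp_diff diff_divide_distrib)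

definition phi :: "real \<Rightarrow> real" where
  "phi t = (1 + t) * ln (1 + t) + (1 - t) * ln (1 - t)"

lemma phi_minus [simp]: "phi (- t) = phi t"
  by (simp add: phi_def algebra_simps)

lemma ratio_eq_exp_phi:
  assumes "0 < a" "0 < b" "a \<noteq> b"
  shows "ratio a b = exp ((phi ((a - b) / (a + b)) / ((a - b) / (a + b))\<^sup>2 - 1) / 2)"
proof -
  define s d where "s = a + b" and "d = a - b"
  define u v w where "u = ln a" and "v = ln b" and "w = ln (s / 2)"
  have "0 < s" "d \<noteq> 0" using assms by (auto simp: s_def d_def)
  have AM_sq: "(AM a b)\<^sup>2 = (s / 2)\<^sup>2" and GM_sq: "(GM a b)\<^sup>2 = a * b"
    using assms by (auto simp: AM_def GM_def s_def)
  have AM_GM_gap: "(s / 2)\<^sup>2 - a * b = d\<^sup>2 / 4"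
    by (simp add: s_def d_def power2_eq_square field_simps)
  have "0 < d\<^sup>2 / 4" using \<open>d \<noteq> 0\<close> by simp
  then have "0 < (s / 2)\<^sup>2" "(s / 2)\<^sup>2 \<noteq> a * b"
    using AM_GM_gap \<open>0 < s\<close> by (auto simp: power2_eq_square)
  moreover have "ln ((s / 2)\<^sup>2) = 2 * w" "ln (a * b) = u + v"
    using \<open>0 < s\<close> assms by (simp_all add: w_def u_def v_def ln_realpow ln_mult)
  ultimately have "ratio a b =
      exp ((a * u - b * v) / d - 1) / exp ((((s / 2)\<^sup>2 * (2 * w) - a * b * (u + v)) / (d\<^sup>2 / 4) - 1) / 2)"
    unfolding ratio_def AM_sq GM_sq using assms
    by (simp add: IM_eq_exp sqrt_exp AM_GM_gap u_def v_def d_def)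
  also have "\<dots> = exp ((((1 + d / s) * (u - w) + (1 - d / s) * (v - w)) / (d / s)\<^sup>2 - 1) / 2)"
  proof -
    have ab: "a = (s + d) / 2" "b = (s - d) / 2" by (simp_all add: s_def d_def)
    show ?thesis
      using \<open>0 < s\<close> \<open>d \<noteq> 0\<close>
      by (simp add: ab exp_diff [symmetric] field_simps power2_eq_square)
  qed
  also have "(1 + d / s) * (u - w) + (1 - d / s) * (v - w) = phi (d / s)"
  proof -
    have "1 + d / s = a / (s / 2)" "1 - d / s = b / (s / 2)"
      using \<open>0 < s\<close> by (simp_all add: s_def d_def field_simps)
    then have "ln (1 + d / s) = u - w" "ln (1 - d / s) = v - w"
      using assms \<open>0 < s\<close> by (simp_all add: u_def v_def w_def ln_div ln_mult)
    then show ?thesis by (simp add: phi_def)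
  qed
  finally show ?thesis by (simp add: s_def d_def)
qed

lemma has_derivative_phi:
  assumes "-1 < x" "x < 1"
  shows "(phi has_real_derivative ln (1 + x) - ln (1 - x)) (at x)"
  unfolding phi_def using assms by (auto intro!: derivative_eq_intros)

text \<open>\<open>x \<phi>'(x) - 2 \<phi>(x)\<close>, the numerator of the derivative of \<open>\<phi>(x)/x\<^sup>2\<close>.\<close>
definition phi_quot_numer :: "real \<Rightarrow> real" where
  "phi_quot_numer x = - (2 + x) * ln (1 + x) - (2 - x) * ln (1 - x)"

lemma phi_quot_numer_pos:
  assumes "0 < t" "t < 1"
  shows "0 < phi_quot_numer t"
proof -
  define g where "g x = ln (1 - x) - ln (1 + x) + 1 / (1 - x) - 1 / (1 + x)" for x :: real
  have g_deriv: "(g has_real_derivative 4 * x\<^sup>2 / (1 - x\<^sup>2)\<^sup>2) (at x)"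
    if "-1 < x" "x < 1" for x
  proof -
    have "0 < (1 - x) * (1 + x)" using that by simp
    then have "1 - x\<^sup>2 \<noteq> 0" by (simp add: algebra_simps power2_eq_square)
    then show ?thesis
      unfolding g_def using that
      by (auto intro!: derivative_eq_intros simp del: power2_eq_square)
         (simp add: divide_simps; simp add: algebra_simps power2_eq_square)
  qed
  have numer_deriv: "(phi_quot_numer has_real_derivative g x) (at x)" if "-1 < x" "x < 1" for x
  proof -
    have "1 - x \<noteq> 0" "1 + x \<noteq> 0" using that by auto
    then show ?thesis
      unfolding phi_quot_numer_def g_def using that
      by (auto intro!: derivative_eq_intros) (simp add: field_simps)
  qed
  have g_deriv_pos: "0 < 4 * x\<^sup>2 / (1 - x\<^sup>2)\<^sup>2" if "0 < x" "x < 1" for x :: real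
  proof -
    have "x\<^sup>2 < 1" using that by (simp add: abs_square_less_1)
    then show ?thesis using that by simp
  qed
  have "g 0 < g x" if "0 < x" "x < 1" for x
    using that g_deriv_pos by (intro DERIV_pos_on_interior_imp_less[OF _ g_deriv]) auto
  then have "phi_quot_numer 0 < phi_quot_numer t"
    using assms by (intro DERIV_pos_on_interior_imp_less[OF _ numer_deriv]) (auto simp: g_def)
  then show ?thesis
    by (simp add: phi_quot_numer_def)
qed

lemma phi_quot_strict_mono:
  assumes "0 < s" "s < u" "u < 1"
  shows "phi s / s\<^sup>2 < phi u / u\<^sup>2"
proof (rule DERIV_pos_on_interior_imp_less
    [where f = "\<lambda>x. phi x / x\<^sup>2" and f' = "\<lambda>x. phi_quot_numer x / x ^ 3"])
  fix x :: real assume x: "s \<le> x" "x \<le> u"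
  then have "0 < x" "x < 1" using assms by auto
  have "((\<lambda>x. phi x / x\<^sup>2) has_real_derivative
      ((ln (1 + x) - ln (1 - x)) * x\<^sup>2 - phi x * (2 * x)) / (x\<^sup>2 * x\<^sup>2)) (at x)"
    using \<open>0 < x\<close> \<open>x < 1\<close> by (auto intro!: derivative_eq_intros has_derivative_phi)
  also have "((ln (1 + x) - ln (1 - x)) * x\<^sup>2 - phi x * (2 * x)) / (x\<^sup>2 * x\<^sup>2)
      = phi_quot_numer x / x ^ 3"
    using \<open>0 < x\<close> by (simp add: field_simps eval_nat_numeral phi_quot_numer_def phi_def)
  finally show "((\<lambda>x. phi x / x\<^sup>2) has_real_derivative phi_quot_numer x / x ^ 3) (at x)" .
qed (use assms in \<open>auto intro!: divide_pos_pos phi_quot_numer_pos\<close>)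

lemma tendsto_phi_quot_0: "((\<lambda>t. phi t / t\<^sup>2) \<longlongrightarrow> 1) (at_right 0)"
  unfolding phi_def by real_asymp

lemma tendsto_phi_quot_1: "((\<lambda>t. phi t / t\<^sup>2) \<longlongrightarrow> 2 * ln 2) (at_left 1)"
  unfolding phi_def by real_asymp

lemma phi_quot_bounds:
  assumes "0 < t" "t < 1"
  shows "1 < phi t / t\<^sup>2" "phi t / t\<^sup>2 < 2 * ln 2"
proof -
  have "0 < t / 2" using assms by simp
  have "\<forall>\<^sub>F u in at_right 0. phi u / u\<^sup>2 \<le> phi (t / 2) / (t / 2)\<^sup>2"
    using eventually_at_right_real[OF \<open>0 < t / 2\<close>]
    by eventually_elim (use assms in \<open>auto intro!: less_imp_le phi_quot_strict_mono\<close>)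
  then have "1 \<le> phi (t / 2) / (t / 2)\<^sup>2"
    by (intro tendsto_upperbound[OF tendsto_phi_quot_0]) auto
  also have "\<dots> < phi t / t\<^sup>2"
    using assms by (intro phi_quot_strict_mono) auto
  finally show "1 < phi t / t\<^sup>2" .
  define t' where "t' = (1 + t) / 2"
  have "t < t'" "t' < 1" using assms by (auto simp: t'_def)
  then have "phi t / t\<^sup>2 < phi t' / t'\<^sup>2"
    using assms by (intro phi_quot_strict_mono) auto
  also have "\<forall>\<^sub>F u in at_left 1. phi t' / t'\<^sup>2 \<le> phi u / u\<^sup>2"
    using eventually_at_left_real[OF \<open>t' < 1\<close>]
    by eventually_elim (use \<open>t < t'\<close> assms in \<open>auto intro!: less_imp_le phi_quot_strict_mono\<close>)
  then have "phi t' / t'\<^sup>2 \<le> 2 * ln 2"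
    by (intro tendsto_lowerbound[OF tendsto_phi_quot_1]) auto
  finally show "phi t / t\<^sup>2 < 2 * ln 2" .
qed

lemma ratio_bounds:
  assumes "0 < a" "0 < b" "a \<noteq> b"
  shows "1 < ratio a b" "ratio a b < 2 / sqrt (exp 1)"
proof -
  define t where "t = \<bar>(a - b) / (a + b)\<bar>"
  define q where "q = phi t / t\<^sup>2"
  have "0 < t" "t < 1"
    using assms by (auto simp: t_def divide_simps abs_if)
  have "ratio a b = exp ((q - 1) / 2)"
    unfolding ratio_eq_exp_phi[OF assms] q_def t_def by (cases "a \<le> b") (simp_all add: abs_if)
  then show "1 < ratio a b" "ratio a b < 2 / sqrt (exp 1)"
    using phi_quot_bounds[OF \<open>0 < t\<close> \<open>t < 1\<close>, folded q_def]
    by (simp_all add: two_div_sqrt_exp_1)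
qed

lemma ratio_1_plus_minus:
  assumes "0 < t" "t < 1"
  shows "ratio (1 + t) (1 - t) = exp ((phi t / t\<^sup>2 - 1) / 2)"
  using ratio_eq_exp_phi[of "1 + t" "1 - t"] assms by simp

lemma tendsto_ratio_0: "((\<lambda>t. ratio (1 + t) (1 - t)) \<longlongrightarrow> 1) (at_right 0)"
proof -
  have "((\<lambda>t. exp ((phi t / t\<^sup>2 - 1) / 2)) \<longlongrightarrow> exp ((1 - 1) / 2)) (at_right 0)"
    by (intro tendsto_intros tendsto_phi_quot_0) simp
  moreover have "\<forall>\<^sub>F t in at_right 0. exp ((phi t / t\<^sup>2 - 1) / 2) = ratio (1 + t) (1 - t)"
    using eventually_at_right_real[OF zero_less_one] by eventually_elim (simp add: ratio_1_plus_minus)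
  ultimately show ?thesis
    by (simp add: tendsto_cong)
qed

lemma tendsto_ratio_1: "((\<lambda>t. ratio (1 + t) (1 - t)) \<longlongrightarrow> 2 / sqrt (exp 1)) (at_left 1)"
proof -
  have "((\<lambda>t. exp ((phi t / t\<^sup>2 - 1) / 2)) \<longlongrightarrow> exp ((2 * ln 2 - 1) / 2)) (at_left 1)"
    by (intro tendsto_intros tendsto_phi_quot_1) simp
  moreover have "\<forall>\<^sub>F t in at_left 1. exp ((phi t / t\<^sup>2 - 1) / 2) = ratio (1 + t) (1 - t)"
    using eventually_at_left_real[OF zero_less_one] by eventually_elim (simp add: ratio_1_plus_minus)
  ultimately show ?thesis
    by (simp add: tendsto_cong two_div_sqrt_exp_1)
qed

theorem theorem1:
  shows "(\<forall>a b::real. 0 < a \<longrightarrow> 0 < b \<longrightarrow> a \<noteq> b \<longrightarrow>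
            1 < ratio a b \<and> ratio a b < 2 / sqrt (exp 1))
       \<and> (\<forall>c::real. c > 1 \<longrightarrow>
            (\<exists>a b::real. 0 < a \<and> 0 < b \<and> a \<noteq> b \<and> ratio a b < c))
       \<and> (\<forall>c::real. c < 2 / sqrt (exp 1) \<longrightarrow>
            (\<exists>a b::real. 0 < a \<and> 0 < b \<and> a \<noteq> b \<and> c < ratio a b))"
proof (intro conjI allI impI)
  fix a b :: real
  assume "0 < a" "0 < b" "a \<noteq> b"
  then show "1 < ratio a b" "ratio a b < 2 / sqrt (exp 1)"
    by (rule ratio_bounds)+
next
  fix c :: real
  assume "c > 1"
  have "\<forall>\<^sub>F t in at_right 0. ratio (1 + t) (1 - t) < c \<and> t \<in> {0<..<1}"
    using order_tendstoD(2)[OF tendsto_ratio_0 \<open>c > 1\<close>] eventually_at_right_real[OF zero_less_one]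
    by (rule eventually_conj)
  then obtain t where "ratio (1 + t) (1 - t) < c" "0 < t" "t < 1"
    using eventually_happens'[OF trivial_limit_at_right_real] by fastforce
  then show "\<exists>a b::real. 0 < a \<and> 0 < b \<and> a \<noteq> b \<and> ratio a b < c"
    by (intro exI[of _ "1 + t"] exI[of _ "1 - t"]) auto
next
  fix c :: real
  assume "c < 2 / sqrt (exp 1)"
  have "\<forall>\<^sub>F t in at_left 1. c < ratio (1 + t) (1 - t) \<and> t \<in> {0<..<1}"
    using order_tendstoD(1)[OF tendsto_ratio_1 \<open>c < 2 / sqrt (exp 1)\<close>]
      eventually_at_left_real[OF zero_less_one]
    by (rule eventually_conj)
  then obtain t where "c < ratio (1 + t) (1 - t)" "0 < t" "t < 1"
    using eventually_happens'[OF trivial_limit_at_left_real] by fastforce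
  then show "\<exists>a b::real. 0 < a \<and> 0 < b \<and> a \<noteq> b \<and> c < ratio a b"
    by (intro exI[of _ "1 + t"] exI[of _ "1 - t"]) auto
qed

end
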